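(* There are infinitely many pairwise non-isomorphic minimal non-matching tournaments.
   Context: A tournament is a finite, non-null, loopless directed graph in which for any two distinct vertices $u,v$ there is exactly one edge with both ends in $\{u,v\}$. Given an ordering $v_1,\dots,v_n$ of its vertices, a backedge is an edge from $v_j$ to $v_i$ with $j>i$; the ordering is a matching ordering if every vertex is the head or tail of at most one backedge. A matching tournament is a tournament having at least one matching ordering. A tournament $G$ is minimal non-matching if $G$ is not a matching tournament but every subtournament (induced on a nonempty proper subset of vertices) is a matching tournament. *)

theory Defs
  imports Main
begin

text \<open>A tournament on a finite nonempty vertex set V with edge relation E
  (only the restriction of E to V matters): E u v means an edge from u to v.\<close>
definition tournament :: "'a set \<Rightarrow> ('a \<Rightarrow> 'a \<Rightarrow> bool) \<Rightarrow> bool" where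
  "tournament V E \<longleftrightarrow> finite V \<and> V \<noteq> {} \<and> (\<forall>v\<in>V. \<not> E v v) \<and>
     (\<forall>u\<in>V. \<forall>v\<in>V. u \<noteq> v \<longrightarrow> (E u v \<longleftrightarrow> \<not> E v u))"

definition backedge :: "('a \<Rightarrow> 'a \<Rightarrow> bool) \<Rightarrow> 'a list \<Rightarrow> nat \<Rightarrow> nat \<Rightarrow> bool" where
  "backedge E vs j i \<longleftrightarrow> i < j \<and> j < length vs \<and> E (vs ! j) (vs ! i)"

definition matching_ordering :: "'a set \<Rightarrow> ('a \<Rightarrow> 'a \<Rightarrow> bool) \<Rightarrow> 'a list \<Rightarrow> bool" where
  "matching_ordering V E vs \<longleftrightarrow> distinct vs \<and> set vs = V \<and>
     (\<forall>j i l k. backedge E vs j i \<and> backedge E vs l k \<and> {vs ! j, vs ! i} \<inter> {vs ! l, vs ! k} \<noteq> {}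
        \<longrightarrow> (j, i) = (l, k))"

definition matching_tournament :: "'a set \<Rightarrow> ('a \<Rightarrow> 'a \<Rightarrow> bool) \<Rightarrow> bool" where
  "matching_tournament V E \<longleftrightarrow> tournament V E \<and> (\<exists>vs. matching_ordering V E vs)"

text \<open>Subtournament induced on S: same edge relation, restricted to S.\<close>
definition minimal_non_matching :: "'a set \<Rightarrow> ('a \<Rightarrow> 'a \<Rightarrow> bool) \<Rightarrow> bool" where
  "minimal_non_matching V E \<longleftrightarrow> tournament V E \<and> \<not> matching_tournament V E \<and>
     (\<forall>S. S \<subseteq> V \<and> S \<noteq> {} \<and> S \<noteq> V \<longrightarrow> matching_tournament S E)"

definition tournament_iso ::
  "'a set \<Rightarrow> ('a \<Rightarrow> 'a \<Rightarrow> bool) \<Rightarrow> 'b set \<Rightarrow> ('b \<Rightarrow> 'b \<Rightarrow> bool) \<Rightarrow> bool" where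
  "tournament_iso V1 E1 V2 E2 \<longleftrightarrow>
     (\<exists>f. bij_betw f V1 V2 \<and> (\<forall>u\<in>V1. \<forall>v\<in>V1. E1 u v \<longleftrightarrow> E2 (f u) (f v)))"

end

theory Submission
  imports Defs
begin

text \<open>The tournaments are \<open>T\<^sub>n = ({..<n}, arc n)\<close> for odd \<open>n \<ge> 9\<close>, obtained from the
  transitive tournament \<open>0 < 1 < \<dots> < n - 1\<close> by reversing the arcs of the path
  \<open>0, 1, 3, 4, \<dots>, n - 4, n - 2, n - 1\<close>. In a matching ordering the position of a vertex
  differs from its in-degree by at most one, and by exactly the backedge at that vertex. For
  \<open>T\<^sub>n\<close> this pins the positions down from the left: every odd vertex \<open>3, 5, \<dots>\<close> is forced one
  place beyond its in-degree and so spends its backedge on an earlier vertex, until at the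
  right end no position is left. After deleting any vertex the rigidity is gone: in the
  natural order (rearranged near the deleted end for the vertex \<open>0\<close>) one transposes a set of
  adjacent pairs joined by reversed arcs so that the reversed arcs left over are disjoint.
  Since \<open>v \<mapsto> n - 1 - v\<close> maps \<open>T\<^sub>n\<close> onto its converse, deleting \<open>n - 1 - v\<close> is as good as
  deleting \<open>v\<close>. Different \<open>n\<close> give different numbers of vertices, hence non-isomorphic
  tournaments.\<close>

section \<open>Rankings whose backedges form a matching\<close>

definition rank_matching :: "'a set \<Rightarrow> ('a \<Rightarrow> 'a \<Rightarrow> bool) \<Rightarrow> ('a \<Rightarrow> nat) \<Rightarrow> bool" where
  "rank_matching S E r \<longleftrightarrow> (\<forall>x\<in>S. \<forall>y\<in>S. \<forall>z\<in>S. \<forall>w\<in>S.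
     E x y \<and> r y < r x \<and> E z w \<and> r w < r z \<and> (x = z \<or> x = w \<or> y = z \<or> y = w)
     \<longrightarrow> x = z \<and> y = w)"

lemma rank_matchingD:
  "rank_matching S E r \<Longrightarrow> x \<in> S \<Longrightarrow> y \<in> S \<Longrightarrow> z \<in> S \<Longrightarrow> w \<in> S \<Longrightarrow>
   E x y \<Longrightarrow> r y < r x \<Longrightarrow> E z w \<Longrightarrow> r w < r z \<Longrightarrow> x = z \<or> x = w \<or> y = z \<or> y = w \<Longrightarrow>
   x = z \<and> y = w"
  unfolding rank_matching_def by blast

lemma rank_matching_subset: "rank_matching S E r \<Longrightarrow> T \<subseteq> S \<Longrightarrow> rank_matching T E r"
  unfolding rank_matching_def by blast

lemma rank_matching_order_cong:
  assumes "rank_matching S E r" and "\<And>x y. x \<in> S \<Longrightarrow> y \<in> S \<Longrightarrow> r' x < r' y \<longleftrightarrow> r x < r y"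
  shows "rank_matching S E r'"
  unfolding rank_matching_def
proof (intro ballI impI)
  fix x y z w assume "x \<in> S" "y \<in> S" "z \<in> S" "w \<in> S"
    and "E x y \<and> r' y < r' x \<and> E z w \<and> r' w < r' z \<and> (x = z \<or> x = w \<or> y = z \<or> y = w)"
  then show "x = z \<and> y = w" using rank_matchingD[OF assms(1), of x y z w] assms(2) by simp
qed

lemma rank_matching_Un:
  assumes "S\<^sub>1 \<inter> S\<^sub>2 = {}" "rank_matching S\<^sub>1 E r" "rank_matching S\<^sub>2 E r"
    and no_cross: "\<And>x y. x \<in> S\<^sub>1 \<Longrightarrow> y \<in> S\<^sub>2 \<Longrightarrow> \<not> (E x y \<and> r y < r x) \<and> \<not> (E y x \<and> r x < r y)"
  shows "rank_matching (S\<^sub>1 \<union> S\<^sub>2) E r"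
  unfolding rank_matching_def
proof (intro ballI impI)
  fix x y z w assume S: "x \<in> S\<^sub>1 \<union> S\<^sub>2" "y \<in> S\<^sub>1 \<union> S\<^sub>2" "z \<in> S\<^sub>1 \<union> S\<^sub>2" "w \<in> S\<^sub>1 \<union> S\<^sub>2"
    and h: "E x y \<and> r y < r x \<and> E z w \<and> r w < r z \<and> (x = z \<or> x = w \<or> y = z \<or> y = w)"
  have "(x \<in> S\<^sub>1 \<and> y \<in> S\<^sub>1) \<or> (x \<in> S\<^sub>2 \<and> y \<in> S\<^sub>2)" "(z \<in> S\<^sub>1 \<and> w \<in> S\<^sub>1) \<or> (z \<in> S\<^sub>2 \<and> w \<in> S\<^sub>2)"
    using S no_cross h by blast+
  with h assms(1) have "(x \<in> S\<^sub>1 \<and> y \<in> S\<^sub>1 \<and> z \<in> S\<^sub>1 \<and> w \<in> S\<^sub>1) \<or> (x \<in> S\<^sub>2 \<and> y \<in> S\<^sub>2 \<and> z \<in> S\<^sub>2 \<and> w \<in> S\<^sub>2)"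
    by blast
  then show "x = z \<and> y = w"
    using rank_matchingD[OF assms(2), of x y z w] rank_matchingD[OF assms(3), of x y z w] h by blast
qed

lemma matching_ordering_if_rank_matching:
  fixes S :: "'a::linorder set"
  assumes "finite S" and inj: "inj_on r S" and matching: "rank_matching S E r"
  shows "\<exists>vs. matching_ordering S E vs"
proof -
  define vs where "vs = sort_key r (sorted_list_of_set S)"
  have distinct: "distinct vs" and set: "set vs = S" and sorted: "sorted (map r vs)"
    using \<open>finite S\<close> by (simp_all add: vs_def)
  have rank_less: "r (vs ! i) < r (vs ! j)" if "i < j" "j < length vs" for i j
  proof -
    have "r (vs ! i) \<le> r (vs ! j)" using sorted_nth_mono[OF sorted, of i j] that by simp
    moreover have "vs ! i \<noteq> vs ! j" using distinct that nth_eq_iff_index_eq by fastforce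
    moreover have "vs ! i \<in> S" "vs ! j \<in> S" using set that by auto
    ultimately show ?thesis using inj unfolding inj_on_def by force
  qed
  have "matching_ordering S E vs"
    unfolding matching_ordering_def
  proof (intro conjI allI impI)
    fix j i l k
    assume "backedge E vs j i \<and> backedge E vs l k \<and> {vs ! j, vs ! i} \<inter> {vs ! l, vs ! k} \<noteq> {}"
    then have b1: "i < j" "j < length vs" "E (vs ! j) (vs ! i)"
      and b2: "k < l" "l < length vs" "E (vs ! l) (vs ! k)"
      and shared: "vs ! j = vs ! l \<or> vs ! j = vs ! k \<or> vs ! i = vs ! l \<or> vs ! i = vs ! k"
      by (auto simp: backedge_def)
    have "vs ! j \<in> S" "vs ! i \<in> S" "vs ! l \<in> S" "vs ! k \<in> S" using b1 b2 set by auto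
    from rank_matchingD[OF matching this b1(3) rank_less[OF b1(1,2)] b2(3) rank_less[OF b2(1,2)] shared]
    show "(j, i) = (l, k)" using distinct b1 b2 nth_eq_iff_index_eq by auto
  qed (use distinct set in auto)
  then show ?thesis by blast
qed

lemma rank_matching_if_matching_ordering:
  assumes ordering: "matching_ordering V E vs"
  obtains pos where "bij_betw pos V {..<card V}" "rank_matching V E pos"
proof -
  have distinct: "distinct vs" and set: "set vs = V"
    using ordering by (auto simp: matching_ordering_def)
  have len: "length vs = card V" using distinct set distinct_card by fastforce
  have bij: "bij_betw ((!) vs) {..<length vs} V" using distinct set bij_betw_nth by blast
  define pos where "pos = inv_into {..<length vs} ((!) vs)"
  have pos_bij: "bij_betw pos V {..<length vs}" unfolding pos_def using bij bij_betw_inv_into by blast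
  have nth_pos: "vs ! pos x = x" if "x \<in> V" for x
    unfolding pos_def using bij that by (simp add: bij_betw_def f_inv_into_f)
  have pos_less: "pos x < length vs" if "x \<in> V" for x using pos_bij that bij_betw_apply by fastforce
  have "rank_matching V E pos" unfolding rank_matching_def
  proof (intro ballI impI)
    fix x y z w assume V: "x \<in> V" "y \<in> V" "z \<in> V" "w \<in> V"
      and h: "E x y \<and> pos y < pos x \<and> E z w \<and> pos w < pos z \<and> (x = z \<or> x = w \<or> y = z \<or> y = w)"
    have "backedge E vs (pos x) (pos y)" "backedge E vs (pos z) (pos w)"
      "{vs ! pos x, vs ! pos y} \<inter> {vs ! pos z, vs ! pos w} \<noteq> {}"
      using h V nth_pos pos_less by (auto simp: backedge_def)
    then have "(pos x, pos y) = (pos z, pos w)"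
      using ordering unfolding matching_ordering_def by blast
    then show "x = z \<and> y = w" using nth_pos V by (metis prod.inject)
  qed
  then show ?thesis using that pos_bij len by simp
qed

section \<open>Positions versus in-degrees\<close>

locale ranked_tournament =
  fixes V :: "'a set" and E :: "'a \<Rightarrow> 'a \<Rightarrow> bool" and pos :: "'a \<Rightarrow> nat"
  assumes tournament: "tournament V E"
    and pos_bij: "bij_betw pos V {..<card V}"
    and pos_matching: "rank_matching V E pos"
begin

definition in_nbrs :: "'a \<Rightarrow> 'a set" where
  "in_nbrs v = {u \<in> V. E u v}"

lemma finite_V: "finite V"
  using tournament by (simp add: tournament_def)

lemma irrefl: "v \<in> V \<Longrightarrow> \<not> E v v"
  using tournament unfolding tournament_def by blast

lemma total: "u \<in> V \<Longrightarrow> v \<in> V \<Longrightarrow> u \<noteq> v \<Longrightarrow> E u v \<longleftrightarrow> \<not> E v u"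
  using tournament unfolding tournament_def by blast

lemma pos_inj: "u \<in> V \<Longrightarrow> v \<in> V \<Longrightarrow> pos u = pos v \<Longrightarrow> u = v"
  using pos_bij by (auto simp: bij_betw_def dest: inj_onD)

lemma pos_less_card: "v \<in> V \<Longrightarrow> pos v < card V"
  using pos_bij bij_betw_apply by fastforce

lemma pos_surj: "p < card V \<Longrightarrow> \<exists>w\<in>V. pos w = p"
  using pos_bij by (metis bij_betw_def imageE lessThan_iff)

lemma card_before: "v \<in> V \<Longrightarrow> card {u \<in> V. pos u < pos v} = pos v"
proof -
  assume v: "v \<in> V"
  have "pos ` {u \<in> V. pos u < pos v} = {..<pos v}"
  proof
    show "{..<pos v} \<subseteq> pos ` {u \<in> V. pos u < pos v}"
    proof
      fix q assume "q \<in> {..<pos v}"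
      moreover have "q < card V" using pos_less_card[OF v] \<open>q \<in> {..<pos v}\<close> by simp
      then obtain w where "w \<in> V" "pos w = q" using pos_surj by blast
      ultimately show "q \<in> pos ` {u \<in> V. pos u < pos v}" by force
    qed
  qed auto
  moreover have "inj_on pos {u \<in> V. pos u < pos v}"
    using pos_bij by (auto simp: bij_betw_def intro: inj_on_subset)
  ultimately show ?thesis using card_image by fastforce
qed

lemma card_in_nbrs_le: "v \<in> V \<Longrightarrow> card (in_nbrs v) \<le> pos v + 1"
proof -
  assume v: "v \<in> V"
  let ?later = "{u \<in> in_nbrs v. pos v < pos u}"
  have "in_nbrs v \<subseteq> {u \<in> V. pos u < pos v} \<union> ?later"
    using irrefl pos_inj v by (fastforce simp: in_nbrs_def)
  then have "card (in_nbrs v) \<le> card ({u \<in> V. pos u < pos v} \<union> ?later)"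
    using finite_V by (intro card_mono) (auto simp: in_nbrs_def)
  also have "\<dots> \<le> card {u \<in> V. pos u < pos v} + card ?later"
    by (rule card_Un_le)
  finally have "card (in_nbrs v) \<le> card {u \<in> V. pos u < pos v} + card ?later" .
  moreover have "card ?later \<le> 1"
  proof -
    have "a = b" if "a \<in> ?later" "b \<in> ?later" for a b
      using that rank_matchingD[OF pos_matching, of a v b v] v by (auto simp: in_nbrs_def)
    then show ?thesis using card_le_Suc0_iff_eq[of ?later] finite_V by (auto simp: in_nbrs_def)
  qed
  ultimately show ?thesis using card_before[OF v] by simp
qed

lemma pos_le_card_in_nbrs: "v \<in> V \<Longrightarrow> pos v \<le> card (in_nbrs v) + 1"
proof -
  assume v: "v \<in> V"
  let ?earlier_out = "{u \<in> V. pos u < pos v \<and> E v u}"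
  have "{u \<in> V. pos u < pos v} \<subseteq> in_nbrs v \<union> ?earlier_out"
    using total[OF _ v] by (auto simp: in_nbrs_def)
  then have "card {u \<in> V. pos u < pos v} \<le> card (in_nbrs v \<union> ?earlier_out)"
    using finite_V by (intro card_mono) (auto simp: in_nbrs_def)
  also have "\<dots> \<le> card (in_nbrs v) + card ?earlier_out"
    by (rule card_Un_le)
  finally have "card {u \<in> V. pos u < pos v} \<le> card (in_nbrs v) + card ?earlier_out" .
  moreover have "card ?earlier_out \<le> 1"
  proof -
    have "a = b" if "a \<in> ?earlier_out" "b \<in> ?earlier_out" for a b
      using that rank_matchingD[OF pos_matching v, of a v b] v by auto
    then show ?thesis using card_le_Suc0_iff_eq[of ?earlier_out] finite_V by auto
  qed
  ultimately show ?thesis using card_before[OF v] by simp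
qed

lemma in_nbr_before_if_backedge:
  assumes v: "v \<in> V" and z: "z \<in> V" and "E v z" "pos z < pos v" and u: "u \<in> in_nbrs v"
  shows "pos u < pos v"
proof (rule ccontr)
  assume "\<not> pos u < pos v"
  moreover have "u \<in> V" "E u v" "u \<noteq> v" using u irrefl by (auto simp: in_nbrs_def)
  ultimately have "pos v < pos u" using pos_inj v by (metis linorder_neqE_nat)
  then show False
    using rank_matchingD[OF pos_matching \<open>u \<in> V\<close> v v z \<open>E u v\<close> _ assms(3,4)] \<open>u \<noteq> v\<close> by blast
qed

lemma card_in_nbrs_less_if_backedge:
  assumes v: "v \<in> V" and z: "z \<in> V" and "E v z" "pos z < pos v"
  shows "card (in_nbrs v) < pos v"
proof -
  have "z \<notin> in_nbrs v" using total[OF v z] irrefl[OF v] assms(3) by (auto simp: in_nbrs_def)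
  moreover have "insert z (in_nbrs v) \<subseteq> {u \<in> V. pos u < pos v}"
    using in_nbr_before_if_backedge[OF assms] z assms(4) by (auto simp: in_nbrs_def)
  then have "card (insert z (in_nbrs v)) \<le> pos v"
    using finite_V card_before[OF v] card_mono[of "{u \<in> V. pos u < pos v}"] by simp
  ultimately show ?thesis using finite_V by (simp add: in_nbrs_def)
qed

lemma later_in_nbr:
  assumes v: "v \<in> V" and "pos v < card (in_nbrs v)"
  obtains u where "u \<in> V" "E u v" "pos v < pos u"
proof -
  have "\<not> in_nbrs v \<subseteq> {u \<in> V. pos u < pos v}"
    using card_mono[of "{u \<in> V. pos u < pos v}" "in_nbrs v"] finite_V card_before[OF v] assms(2)
    by fastforce
  then obtain u where u: "u \<in> in_nbrs v" "\<not> pos u < pos v" by (auto simp: in_nbrs_def)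
  then have "u \<in> V" "E u v" by (simp_all add: in_nbrs_def)
  moreover have "pos u \<noteq> pos v" using pos_inj[OF \<open>u \<in> V\<close> v] irrefl[OF v] \<open>E u v\<close> by auto
  then have "pos v < pos u" using u(2) by simp
  ultimately show ?thesis by (rule that)
qed

end

section \<open>The tournaments\<close>

text \<open>The pairs \<open>p < q\<close> with \<open>reversed n p q\<close> are the edges of the path
  \<open>0, 1, 3, 4, \<dots>, n - 4, n - 2, n - 1\<close>, which misses \<open>2\<close> and \<open>n - 3\<close>.\<close>

definition reversed :: "nat \<Rightarrow> nat \<Rightarrow> nat \<Rightarrow> bool" where
  "reversed n p q \<longleftrightarrow> (q = Suc p \<and> p \<noteq> 1 \<and> p \<noteq> 2 \<and> p + 4 \<noteq> n \<and> p + 3 \<noteq> n)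
     \<or> (p = 1 \<and> q = 3) \<or> (p + 4 = n \<and> q + 2 = n)"

definition arc :: "nat \<Rightarrow> nat \<Rightarrow> nat \<Rightarrow> bool" where
  "arc n u v \<longleftrightarrow> (u < v \<and> \<not> reversed n u v) \<or> (v < u \<and> reversed n v u)"

lemma arc_irrefl: "\<not> arc n v v"
  by (simp add: arc_def)

lemma arc_total: "u \<noteq> v \<Longrightarrow> arc n u v \<longleftrightarrow> \<not> arc n v u"
  by (cases "u < v") (auto simp: arc_def)

lemma tournament_arc: "S \<subseteq> {..<n} \<Longrightarrow> S \<noteq> {} \<Longrightarrow> tournament S (arc n)"
  unfolding tournament_def using arc_irrefl arc_total finite_subset by blast

lemma reversed_less: "reversed n p q \<Longrightarrow> p < q"
  by (auto simp: reversed_def)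

lemma reversed_unique_lower: "9 \<le> n \<Longrightarrow> reversed n a c \<Longrightarrow> reversed n b c \<Longrightarrow> a = b"
  by (auto simp: reversed_def)

lemma reversed_unique_upper: "9 \<le> n \<Longrightarrow> reversed n a b \<Longrightarrow> reversed n a c \<Longrightarrow> b = c"
  by (auto simp: reversed_def)

lemma reversed_reflect_imp: "q < n \<Longrightarrow> reversed n p q \<Longrightarrow> reversed n (n - 1 - q) (n - 1 - p)"
  unfolding reversed_def by (elim disjE conjE) auto

lemma reversed_reflect:
  "p < n \<Longrightarrow> q < n \<Longrightarrow> reversed n (n - 1 - q) (n - 1 - p) \<longleftrightarrow> reversed n p q"
  using reversed_reflect_imp[of q n p] reversed_reflect_imp[of "n - 1 - p" n "n - 1 - q"] by auto

lemma arc_reflect: "u < n \<Longrightarrow> v < n \<Longrightarrow> arc n (n - 1 - u) (n - 1 - v) \<longleftrightarrow> arc n v u"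
  using reversed_reflect[of u n v] reversed_reflect[of v n u] by (auto simp: arc_def)

definition indeg :: "nat \<Rightarrow> nat \<Rightarrow> nat" where
  "indeg n v = (if v \<le> 1 then 1 else if n \<le> v + 2 then n - 2 else v)"

lemma card_in_arcs:
  assumes n: "9 \<le> n" and v: "v < n"
  shows "card {u. u < n \<and> arc n u v} = indeg n v"
proof -
  consider "v = 0" | "v = 1" | "v = 2" | "v = 3" | "4 \<le> v" "v + 5 \<le> n" | "v + 4 = n"
    | "v + 3 = n" | "v + 2 = n" | "v + 1 = n" using n v by linarith
  then show ?thesis
  proof cases
    case 1
    then have "{u. u < n \<and> arc n u v} = {1}" using n by (auto simp: arc_def reversed_def)
    then show ?thesis using 1 by (simp add: indeg_def)
  next
    case 2
    then have "{u. u < n \<and> arc n u v} = {3}" using n by (auto simp: arc_def reversed_def)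
    then show ?thesis using 2 by (simp add: indeg_def)
  next
    case 3
    then have "{u. u < n \<and> arc n u v} = {0, 1}" using n by (auto simp: arc_def reversed_def)
    then show ?thesis using 3 n by (simp add: indeg_def)
  next
    case 4
    then have "{u. u < n \<and> arc n u v} = {0, 2, 4}" using n by (auto simp: arc_def reversed_def)
    then show ?thesis using 4 n by (simp add: indeg_def)
  next
    case 5
    then have "{u. u < n \<and> arc n u v} = ({..<v} - {v - 1}) \<union> {v + 1}"
      using n by (auto simp: arc_def reversed_def)
    then show ?thesis using 5 n by (simp add: indeg_def)
  next
    case 6
    then have "{u. u < n \<and> arc n u v} = ({..<v} - {v - 1}) \<union> {n - 2}"
      using n by (auto simp: arc_def reversed_def)
    then show ?thesis using 6 n by (simp add: indeg_def)
  next
    case 7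
    then have "{u. u < n \<and> arc n u v} = {..<v}" using n by (auto simp: arc_def reversed_def)
    then show ?thesis using 7 n by (simp add: indeg_def)
  next
    case 8
    then have "{u. u < n \<and> arc n u v} = ({..<v} - {v - 2}) \<union> {v + 1}"
      using n by (auto simp: arc_def reversed_def)
    then show ?thesis using 8 n by (simp add: indeg_def)
  next
    case 9
    then have "{u. u < n \<and> arc n u v} = {..<v} - {v - 1}" using n by (auto simp: arc_def reversed_def)
    then show ?thesis using 9 n by (simp add: indeg_def)
  qed
qed

section \<open>The tournaments are not matching\<close>

locale arc_ranked =
  fixes n m :: nat and pos :: "nat \<Rightarrow> nat"
  assumes n: "n = 2 * m + 9"
    and bij: "bij_betw pos {..<n} {..<n}"
    and matching: "rank_matching {..<n} (arc n) pos"
begin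

sublocale R: ranked_tournament "{..<n}" "arc n" pos
proof
  have "0 \<in> {..<n}" using n by simp
  then show "tournament {..<n} (arc n)" by (intro tournament_arc) auto
  show "bij_betw pos {..<n} {..<card {..<n}}" using bij by simp
qed (rule matching)

lemma n_ge_9: "9 \<le> n"
  using n by simp

lemma card_in_nbrs: "v < n \<Longrightarrow> card (R.in_nbrs v) = indeg n v"
  using card_in_arcs[OF n_ge_9, of v] by (simp add: R.in_nbrs_def)

lemma indeg_le_pos: "v < n \<Longrightarrow> indeg n v \<le> pos v + 1"
  using R.card_in_nbrs_le[of v] card_in_nbrs[of v] by simp

lemma pos_le_indeg: "v < n \<Longrightarrow> pos v \<le> indeg n v + 1"
  using R.pos_le_card_in_nbrs[of v] card_in_nbrs[of v] by simp

lemma pos_inj: "u < n \<Longrightarrow> v < n \<Longrightarrow> pos u = pos v \<Longrightarrow> u = v"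
  using R.pos_inj by simp

lemma pos_surj: "p < n \<Longrightarrow> \<exists>w<n. pos w = p"
  using R.pos_surj[of p] by auto

lemma later_in_arc:
  assumes "v < n" "pos v < indeg n v"
  obtains y where "y < n" "arc n y v" "pos v < pos y"
  using R.later_in_nbr[of v] assms card_in_nbrs[of v] by auto

lemma indeg_less_pos: "v < n \<Longrightarrow> z < n \<Longrightarrow> arc n v z \<Longrightarrow> pos z < pos v \<Longrightarrow> indeg n v < pos v"
  using R.card_in_nbrs_less_if_backedge[of v z] card_in_nbrs[of v] by simp

lemma in_arc_before:
  assumes "v < n" "z < n" "arc n v z" "pos z < pos v" "u < n" "arc n u v"
  shows "pos u < pos v"
proof -
  have "u \<in> R.in_nbrs v" using assms(5,6) by (simp add: R.in_nbrs_def)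
  then show ?thesis using R.in_nbr_before_if_backedge[of v z u] assms(1-4) by simp
qed

lemma backedge_unique:
  assumes "x < n" "y < n" "z < n" "w < n" "arc n x y" "pos y < pos x" "arc n z w" "pos w < pos z"
    and "x = z \<or> x = w \<or> y = z \<or> y = w"
  shows "x = z \<and> y = w"
  using rank_matchingD[OF matching, of x y z w] assms by simp

lemma indeg_small: "2 \<le> v \<Longrightarrow> v + 2 < n \<Longrightarrow> indeg n v = v"
  by (simp add: indeg_def)

lemma indeg_le_1: "v < n \<Longrightarrow> indeg n v \<le> 1 \<Longrightarrow> v \<le> 1"
  using n by (simp add: indeg_def split: if_splits)

lemma indeg_low: "v + 2 < n \<Longrightarrow> indeg n v \<le> max 1 v"
  by (simp add: indeg_def)

lemma indeg_high: "v < n \<Longrightarrow> n \<le> v + 2 \<Longrightarrow> indeg n v = n - 2"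
  using n by (simp add: indeg_def)

lemma in_arc_0: "u < n \<Longrightarrow> arc n u 0 \<Longrightarrow> u = 1"
  using n by (auto simp: arc_def reversed_def)

lemma in_arc_1: "u < n \<Longrightarrow> arc n u 1 \<Longrightarrow> u = 3"
  using n by (auto simp: arc_def reversed_def)

lemma in_arc_2: "u < n \<Longrightarrow> arc n u 2 \<Longrightarrow> u = 0 \<or> u = 1"
  using n by (auto simp: arc_def reversed_def)

lemma in_arc_middle:
  "4 \<le> a \<Longrightarrow> a + 5 \<le> n \<Longrightarrow> arc n y a \<Longrightarrow> (y < a \<and> y \<noteq> a - 1) \<or> y = a + 1"
  using n by (auto simp: arc_def reversed_def)

lemma in_arc_end: "a + 3 = n \<Longrightarrow> y < n \<Longrightarrow> arc n y a \<Longrightarrow> y < a"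
  using n by (auto simp: arc_def reversed_def)

lemma arcs_near_0: "arc n 1 0" "arc n 3 1" "arc n 2 3" "arc n 4 3"
  using n by (auto simp: arc_def reversed_def)

text \<open>The odd vertex \<open>v\<close> sits one place beyond its in-degree, which it can only afford by
  spending its backedge on an arc to an earlier vertex.\<close>

definition forced :: "nat \<Rightarrow> bool" where
  "forced v \<longleftrightarrow> pos (v - 1) \<le> v - 1 \<and> pos v = v + 1 \<and> (\<exists>z<v. arc n v z \<and> pos z < pos v)"

lemma pos_Suc_if_forced:
  assumes v: "3 \<le> v" "v + 4 \<le> n" and "forced v"
  shows "pos (v + 1) = v"
proof -
  obtain w where w: "w < n" "pos w = v" using pos_surj[of v] v by auto
  have upper: "indeg n w \<le> v + 1" and lower: "v \<le> indeg n w + 1"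
    using indeg_le_pos[OF w(1)] pos_le_indeg[OF w(1)] w by simp_all
  have "2 \<le> w"
  proof (rule ccontr)
    assume "\<not> 2 \<le> w"
    then show False using lower v by (simp add: indeg_def)
  qed
  moreover have "w + 2 < n"
  proof (rule ccontr)
    assume "\<not> w + 2 < n"
    then show False using upper v indeg_high w by simp
  qed
  ultimately have "indeg n w = w" by (rule indeg_small)
  moreover have "w \<noteq> v - 1" "w \<noteq> v" using \<open>forced v\<close> w v by (auto simp: forced_def)
  ultimately have "w = v + 1" using upper lower by simp
  then show ?thesis using w by simp
qed

lemma forced_3: "forced 3"
proof -
  obtain x0 where x0: "x0 < n" "pos x0 = 0" using pos_surj[of 0] n by auto
  have "x0 \<le> 1" using indeg_le_pos[OF x0(1)] indeg_le_1 x0 by simp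
  then have "pos x0 < indeg n x0" using x0 by (simp add: indeg_def)
  then obtain u where u: "u < n" "arc n u x0" "pos x0 < pos u" using later_in_arc x0 by blast
  show ?thesis
  proof (cases "x0 = 0")
    case True
    then have "u = 1" using in_arc_0 u by simp
    have pos_1: "2 \<le> pos 1"
      using indeg_less_pos[of 1 0] arcs_near_0 u \<open>u = 1\<close> True x0 n by (simp add: indeg_def)
    obtain w where w: "w < n" "pos w = 1" using pos_surj[of 1] n by auto
    have "indeg n w \<le> 2" using indeg_le_pos[OF w(1)] w by simp
    then have "w \<le> 2" using w n by (simp add: indeg_def split: if_splits)
    moreover have "w \<noteq> 0" "w \<noteq> 1" using w x0 True pos_1 by (cases "w = 0"; auto)+
    ultimately have "w = 2" by simp
    then have "pos 2 < indeg n 2" using w n by (simp add: indeg_def)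
    then obtain y where y: "y < n" "arc n y 2" "pos 2 < pos y" using later_in_arc[of 2] n by auto
    have "y \<noteq> 0" using y w \<open>w = 2\<close> x0 True by (cases "y = 0") auto
    then have "y = 1" using in_arc_2 y by blast
    then show ?thesis
      using backedge_unique[of 1 0 1 2] arcs_near_0 y u \<open>u = 1\<close> True x0 n by simp
  next
    case False
    then have "x0 = 1" using \<open>x0 \<le> 1\<close> by simp
    then have "u = 3" using in_arc_1 u by simp
    have "4 \<le> pos 3"
      using indeg_less_pos[of 3 1] arcs_near_0 u \<open>u = 3\<close> \<open>x0 = 1\<close> x0 n by (simp add: indeg_def)
    moreover have "pos 3 \<le> 4" using pos_le_indeg[of 3] n by (simp add: indeg_def)
    ultimately have pos_3: "pos 3 = 4" by simp
    have "pos 2 < 4" "pos 4 < 4"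
      using in_arc_before[of 3 1 2] in_arc_before[of 3 1 4] arcs_near_0 u \<open>u = 3\<close> \<open>x0 = 1\<close> x0 n pos_3
      by simp_all
    moreover have "3 \<le> pos 4" using indeg_le_pos[of 4] n by (simp add: indeg_def)
    ultimately have "pos 2 \<le> 2" using pos_inj[of 4 2] n by fastforce
    moreover have "\<exists>z<3. arc n 3 z \<and> pos z < pos 3"
      using arcs_near_0 x0 \<open>x0 = 1\<close> pos_3 by (intro exI[of _ 1]) simp
    ultimately show ?thesis using pos_3 by (simp add: forced_def)
  qed
qed

text \<open>An in-neighbour \<open>y\<close> of \<open>v + 1\<close> placed after it must be \<open>v + 2\<close>: the candidates below
  \<open>v - 1\<close> have too small in-degree, \<open>v - 1\<close> sits before \<open>v\<close>, and \<open>v\<close> has used its backedge.\<close>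

lemma later_in_arc_Suc:
  assumes v: "3 \<le> v" "v + 4 \<le> n" and "forced v"
    and y: "y < n" "arc n y (v + 1)" "v < pos y" "y < v + 1"
  shows False
proof (cases "y = v")
  case True
  obtain z where "z < v" "arc n v z" "pos z < pos v" using \<open>forced v\<close> by (auto simp: forced_def)
  moreover have "pos v = v + 1" using \<open>forced v\<close> by (simp add: forced_def)
  ultimately show False
    using backedge_unique[of v "v + 1" v z] y True pos_Suc_if_forced[OF v \<open>forced v\<close>] v by simp
next
  case False
  show False
  proof (cases "y = v - 1")
    case True
    then show False using \<open>forced v\<close> y v by (auto simp: forced_def)
  next
    case False
    then have "y \<le> v - 2" using \<open>y \<noteq> v\<close> y v by arith
    moreover have "y + 2 < n" using \<open>y \<le> v - 2\<close> v by simp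
    ultimately have "indeg n y \<le> v - 2" using indeg_low[of y] v by simp
    then show False using pos_le_indeg[of y] y v by simp
  qed
qed

lemma forced_Suc_Suc:
  assumes v: "3 \<le> v" "v + 6 \<le> n" and "forced v"
  shows "forced (v + 2)"
proof -
  have pos_Suc: "pos (v + 1) = v" using pos_Suc_if_forced[OF _ _ \<open>forced v\<close>] v by simp
  moreover have "indeg n (v + 1) = v + 1" using v by (simp add: indeg_def)
  ultimately obtain y where y: "y < n" "arc n y (v + 1)" "v < pos y"
    using later_in_arc[of "v + 1"] v by auto
  have "\<not> y < v + 1" using later_in_arc_Suc[OF _ _ \<open>forced v\<close> y] v by auto
  then have "y = v + 2" using in_arc_middle[of "v + 1" y] y(2) v by simp
  have "v + 2 < pos (v + 2)"
    using indeg_less_pos[of "v + 2" "v + 1"] y \<open>y = v + 2\<close> pos_Suc v by (simp add: indeg_def)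
  moreover have "pos (v + 2) \<le> v + 3" using pos_le_indeg[of "v + 2"] v by (simp add: indeg_def)
  ultimately have "pos (v + 2) = v + 3" by simp
  moreover have "arc n (v + 2) (v + 1)" "pos (v + 1) < pos (v + 2)"
    using y \<open>y = v + 2\<close> pos_Suc by simp_all
  ultimately show ?thesis using pos_Suc unfolding forced_def by (intro conjI exI[of _ "v + 1"]) simp_all
qed

lemma not_forced_at_end:
  assumes v: "3 \<le> v" "v + 4 = n"
  shows "\<not> forced v"
proof
  assume "forced v"
  have "pos (v + 1) = v" using pos_Suc_if_forced[OF _ _ \<open>forced v\<close>] v by simp
  moreover have "indeg n (v + 1) = v + 1" using v by (simp add: indeg_def)
  ultimately obtain y where y: "y < n" "arc n y (v + 1)" "v < pos y"
    using later_in_arc[of "v + 1"] v by auto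
  then show False using later_in_arc_Suc[OF _ _ \<open>forced v\<close> y] in_arc_end[of "v + 1" y] v by simp
qed

lemma forced_odd: "j \<le> m + 1 \<Longrightarrow> forced (2 * j + 3)"
proof (induction j)
  case 0
  then show ?case using forced_3 by simp
next
  case (Suc j)
  then have "forced (2 * j + 3 + 2)" using forced_Suc_Suc[of "2 * j + 3"] n by simp
  then show ?case by (simp add: algebra_simps)
qed

lemma no_matching_rank: False
  using not_forced_at_end[of "2 * (m + 1) + 3"] forced_odd[of "m + 1"] n by simp

end

lemma not_matching_tournament_arc:
  assumes "n = 2 * m + 9"
  shows "\<not> matching_tournament {..<n} (arc n)"
proof
  assume "matching_tournament {..<n} (arc n)"
  then obtain vs where "matching_ordering {..<n} (arc n) vs" by (auto simp: matching_tournament_def)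
  then obtain pos where "bij_betw pos {..<n} {..<card {..<n}}" "rank_matching {..<n} (arc n) pos"
    by (rule rank_matching_if_matching_ordering)
  then have "arc_ranked n m pos" using assms by unfold_locales simp_all
  then show False by (rule arc_ranked.no_matching_rank)
qed

section \<open>Deleting a vertex leaves a matching tournament\<close>

definition reversal_pairing :: "nat \<Rightarrow> nat set \<Rightarrow> (nat \<Rightarrow> nat) \<Rightarrow> bool" where
  "reversal_pairing n S m \<longleftrightarrow>
     (\<forall>u\<in>S. m u \<in> S \<and> m (m u) = u \<and> (u < m u \<longrightarrow> reversed n u (m u))) \<and>
     (\<forall>u\<in>S. \<forall>w\<in>S. \<not> (u < w \<and> w < m u) \<and> \<not> (m u < w \<and> w < u))"

lemma reversal_pairingI:
  assumes "\<And>u. u \<in> S \<Longrightarrow> m u \<in> S" "\<And>u. u \<in> S \<Longrightarrow> m (m u) = u"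
    and "\<And>u. u \<in> S \<Longrightarrow> u < m u \<Longrightarrow> reversed n u (m u)"
    and "\<And>u w. u \<in> S \<Longrightarrow> w \<in> S \<Longrightarrow> \<not> (u < w \<and> w < m u) \<and> \<not> (m u < w \<and> w < u)"
  shows "reversal_pairing n S m"
  using assms unfolding reversal_pairing_def by blast

lemma reversal_pairingD:
  assumes "reversal_pairing n S m" "u \<in> S"
  shows "m u \<in> S" "m (m u) = u" "u < m u \<Longrightarrow> reversed n u (m u)"
    and "w \<in> S \<Longrightarrow> \<not> (u < w \<and> w < m u) \<and> \<not> (m u < w \<and> w < u)"
  using assms unfolding reversal_pairing_def by blast+

lemma reversal_pairing_less:
  assumes pairing: "reversal_pairing n S m" and x: "x \<in> S" and y: "y \<in> S"
    and "x < y" "m x \<noteq> y"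
  shows "m x < m y"
proof (rule ccontr)
  note inv = reversal_pairingD(1,2)[OF pairing x] reversal_pairingD(2)[OF pairing y]
  note adjacent = reversal_pairingD(4)[OF pairing]
  assume "\<not> m x < m y"
  moreover have "m x \<noteq> m y" using inv \<open>x < y\<close> by (metis less_irrefl)
  ultimately have "m y < m x" by simp
  show False
  proof (cases "x < m x")
    case True
    then have "m x < y" using adjacent[OF x y] \<open>x < y\<close> \<open>m x \<noteq> y\<close> by (metis linorder_neqE_nat)
    then show False using adjacent[OF y inv(1)] \<open>m y < m x\<close> by simp
  next
    case False
    then show False using adjacent[OF y x] \<open>m y < m x\<close> \<open>x < y\<close> by simp
  qed
qed

text \<open>Ranking by \<open>m\<close> transposes the adjacent pairs of the pairing and keeps the order of all
  other pairs. So the backedges are the reversed arcs that are not paired, and these are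
  disjoint when every path of two reversed arcs contains a paired one.\<close>

lemma rank_matching_reversal_pairing:
  assumes n: "9 \<le> n" and pairing: "reversal_pairing n S m"
    and covers: "\<And>a b c. a \<in> S \<Longrightarrow> b \<in> S \<Longrightarrow> c \<in> S \<Longrightarrow> reversed n a b \<Longrightarrow> reversed n b c \<Longrightarrow>
      m a = b \<or> m b = c"
  shows "inj_on m S" and "rank_matching S (arc n) m"
proof -
  note inv = reversal_pairingD(1,2)[OF pairing]
  have backedge: "y < x \<and> reversed n y x \<and> m y \<noteq> x"
    if x: "x \<in> S" and y: "y \<in> S" and "arc n x y" "m y < m x" for x y
  proof -
    have "\<not> x < y"
    proof
      assume "x < y"
      then have "\<not> reversed n x y" using \<open>arc n x y\<close> by (auto simp: arc_def)
      then have "m x \<noteq> y" using reversal_pairingD(3)[OF pairing x] \<open>x < y\<close> by auto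
      then show False using reversal_pairing_less[OF pairing x y \<open>x < y\<close>] \<open>m y < m x\<close> by simp
    qed
    moreover have "x \<noteq> y" using \<open>m y < m x\<close> by auto
    ultimately have "y < x" by simp
    moreover have "m y \<noteq> x" using inv[OF y] \<open>m y < m x\<close> \<open>y < x\<close> by auto
    ultimately show ?thesis using \<open>arc n x y\<close> by (auto simp: arc_def)
  qed
  show "rank_matching S (arc n) m"
    unfolding rank_matching_def
  proof (intro ballI impI)
    fix x y z w assume S: "x \<in> S" "y \<in> S" "z \<in> S" "w \<in> S"
      and h: "arc n x y \<and> m y < m x \<and> arc n z w \<and> m w < m z \<and> (x = z \<or> x = w \<or> y = z \<or> y = w)"
    have xy: "reversed n y x" "m y \<noteq> x" and zw: "reversed n w z" "m w \<noteq> z"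
      using backedge[of x y] backedge[of z w] S h by auto
    consider "x = z" | "y = w" | "x = w" | "y = z" using h by blast
    then show "x = z \<and> y = w"
    proof cases
      case 1
      then show ?thesis using reversed_unique_lower[OF n xy(1)] zw by simp
    next
      case 2
      then show ?thesis using reversed_unique_upper[OF n xy(1)] zw by simp
    next
      case 3
      then show ?thesis using covers[of y x z] S xy zw by simp
    next
      case 4
      then show ?thesis using covers[of w y x] S xy zw by simp
    qed
  qed
  show "inj_on m S"
    by (rule inj_onI) (metis inv(2))
qed

definition pair_up :: "(nat \<Rightarrow> bool) \<Rightarrow> nat \<Rightarrow> nat" where
  "pair_up sw u = (if sw u then Suc u else if 0 < u \<and> sw (u - 1) then u - 1 else u)"

lemma pair_up_Suc: "sw a \<Longrightarrow> pair_up sw a = Suc a"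
  by (simp add: pair_up_def)

lemma pair_up_adjacent: "\<not> (u < w \<and> w < pair_up sw u) \<and> \<not> (pair_up sw u < w \<and> w < u)"
  by (auto simp: pair_up_def)

lemma reversal_pairing_pair_up:
  assumes "\<And>u. sw u \<Longrightarrow> u \<in> S \<and> Suc u \<in> S" "\<And>u. sw u \<Longrightarrow> \<not> sw (Suc u)"
    and "\<And>u. sw u \<Longrightarrow> reversed n u (Suc u)"
  shows "reversal_pairing n S (pair_up sw)"
proof (rule reversal_pairingI)
  fix u assume "u \<in> S"
  consider "sw u" | "\<not> sw u" "0 < u" "sw (u - 1)" | "\<not> sw u" "\<not> (0 < u \<and> sw (u - 1))" by blast
  then have "pair_up sw u \<in> S \<and> pair_up sw (pair_up sw u) = u \<and>
    (u < pair_up sw u \<longrightarrow> reversed n u (pair_up sw u))"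
  proof cases
    case 1
    then show ?thesis using assms by (simp add: pair_up_def)
  next
    case 2
    then have "Suc (u - 1) = u" "\<not> u < u - 1" by simp_all
    then show ?thesis using 2 assms(1)[of "u - 1"] by (simp add: pair_up_def)
  next
    case 3
    then have "pair_up sw u = u" by (auto simp: pair_up_def)
    then show ?thesis using \<open>u \<in> S\<close> by simp
  qed
  then show "pair_up sw u \<in> S" "pair_up sw (pair_up sw u) = u"
    "u < pair_up sw u \<Longrightarrow> reversed n u (pair_up sw u)" by simp_all
qed (rule pair_up_adjacent)

lemma reversal_pairing_insert_pair:
  assumes pairing: "reversal_pairing n S m"
    and tight: "\<And>u w. u \<in> S \<Longrightarrow> \<not> (u < w \<and> w < m u) \<and> \<not> (m u < w \<and> w < u)"
    and pq: "p < q" "p \<notin> S" "q \<notin> S" "reversed n p q" "\<And>w. w \<in> S \<Longrightarrow> \<not> (p < w \<and> w < q)"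
  shows "reversal_pairing n (insert p (insert q S)) (m(p := q, q := p))"
proof -
  let ?S = "insert p (insert q S)" and ?m = "m(p := q, q := p)"
  have "?m u \<in> ?S \<and> ?m (?m u) = u \<and> (u < ?m u \<longrightarrow> reversed n u (?m u)) \<and>
    (\<forall>w\<in>?S. \<not> (u < w \<and> w < ?m u) \<and> \<not> (?m u < w \<and> w < u))" if "u \<in> ?S" for u
  proof -
    consider "u = p" | "u = q" | "u \<in> S" using \<open>u \<in> ?S\<close> by blast
    then show ?thesis
    proof cases
      case 3
      have "m u \<in> S" "m (m u) = u" using reversal_pairingD(1,2)[OF pairing 3] .
      moreover have "u \<noteq> p" "u \<noteq> q" "m u \<noteq> p" "m u \<noteq> q"
        using 3 \<open>m u \<in> S\<close> pq(2,3) by blast+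
      ultimately show ?thesis using reversal_pairingD(3)[OF pairing 3] tight[OF 3] by simp
    qed (use pq in auto)
  qed
  then show ?thesis unfolding reversal_pairing_def by blast
qed

lemma reversed_path_cases:
  assumes "9 \<le> n" "reversed n a b" "reversed n b c" "c < n"
  obtains "b = Suc a" "c = Suc b" "3 \<le> a" "a + 6 \<le> n"
    | "a = 0" "b = 1" "c = 3"
    | "a = 1" "b = 3" "c = 4"
    | "a + 5 = n" "b + 4 = n" "c + 2 = n"
    | "a + 4 = n" "b + 2 = n" "c + 1 = n"
proof -
  have "(b = Suc a \<and> c = Suc b \<and> 3 \<le> a \<and> a + 6 \<le> n) \<or> (a = 0 \<and> b = 1 \<and> c = 3)
    \<or> (a = 1 \<and> b = 3 \<and> c = 4) \<or> (a + 5 = n \<and> b + 4 = n \<and> c + 2 = n)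
    \<or> (a + 4 = n \<and> b + 2 = n \<and> c + 1 = n)"
    using assms(2,3) unfolding reversed_def
  proof (elim disjE conjE)
    assume "b = Suc a" "c = Suc b" "a \<noteq> 1" "b \<noteq> 1" "a \<noteq> 2" "b \<noteq> 2" "a + 4 \<noteq> n"
      "a + 3 \<noteq> n" "b + 4 \<noteq> n" "b + 3 \<noteq> n"
    moreover from this have "3 \<le> a \<and> a + 6 \<le> n" using assms(1,4) by linarith
    ultimately show ?thesis by simp
  qed (use assms(1) in simp_all)
  then show ?thesis using that by blast
qed

text \<open>Below the deleted vertex \<open>v\<close> the pairs start at odd vertices and above it at even ones,
  so that the pairing covers the paths of reversed arcs on both sides of \<open>v\<close>.\<close>

definition switch_around :: "nat \<Rightarrow> nat \<Rightarrow> nat \<Rightarrow> bool" where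
  "switch_around n v u \<longleftrightarrow> (u = 0 \<and> v \<noteq> 1) \<or> (odd u \<and> 3 \<le> u \<and> u + 1 < v \<and> u + 5 \<le> n)
     \<or> (even u \<and> 4 \<le> u \<and> u + 5 \<le> n \<and> v < u) \<or> (u + 2 = n \<and> v + 2 \<noteq> n \<and> v + 1 \<noteq> n)"

lemma matching_rank_delete_inner:
  assumes n: "n = 2 * k + 9" and v: "v < n" "v \<noteq> 0" "v \<noteq> 2" "v + 3 \<noteq> n" "v + 1 \<noteq> n"
  shows "\<exists>r. inj_on r ({..<n} - {v}) \<and> rank_matching ({..<n} - {v}) (arc n) r"
proof -
  let ?S = "{..<n} - {v}" and ?m = "pair_up (switch_around n v)"
  have pairing: "reversal_pairing n ?S ?m"
    by (rule reversal_pairing_pair_up) (use n v in \<open>auto simp: switch_around_def reversed_def\<close>)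
  have covers: "?m a = b \<or> ?m b = c"
    if abc: "a \<in> ?S" "b \<in> ?S" "c \<in> ?S" and "reversed n a b" "reversed n b c" for a b c
  proof -
    have n9: "9 \<le> n" and c: "c < n" using n abc(3) by simp_all
    have "switch_around n v a \<and> b = Suc a \<or> switch_around n v b \<and> c = Suc b"
      using n9 \<open>reversed n a b\<close> \<open>reversed n b c\<close> c
    proof (cases rule: reversed_path_cases)
      case 1
      moreover have "a \<noteq> v" "Suc a \<noteq> v" "Suc (Suc a) \<noteq> v" using abc 1 by auto
      ultimately have "switch_around n v a \<or> switch_around n v (Suc a)"
        using v unfolding switch_around_def by presburger
      then show ?thesis using 1 by auto
    next
      case 2
      then show ?thesis using abc by (auto simp: switch_around_def)
    next
      case 3
      then have "4 < v" using abc v by auto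
      then show ?thesis using 3 n by (auto simp: switch_around_def)
    next
      case 4
      then have "v < a" using abc v by auto
      moreover have "even a" using 4 n by presburger
      ultimately show ?thesis using 4 n by (auto simp: switch_around_def)
    next
      case 5
      then show ?thesis using abc v by (auto simp: switch_around_def)
    qed
    then show ?thesis using pair_up_Suc by metis
  qed
  have "9 \<le> n" using n by simp
  from rank_matching_reversal_pairing[OF this pairing covers] show ?thesis by blast
qed

definition even_switch :: "nat \<Rightarrow> nat \<Rightarrow> bool" where
  "even_switch n u \<longleftrightarrow> (even u \<and> 4 \<le> u \<and> u + 5 \<le> n) \<or> u + 2 = n"

lemma reversal_pairing_even_switch:
  "n = 2 * k + 9 \<Longrightarrow> reversal_pairing n ({..<n} - {1, 2, 3}) (pair_up (even_switch n))"
  by (rule reversal_pairing_pair_up) (auto simp: even_switch_def reversed_def)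

lemma even_switch_covers:
  assumes n: "n = 2 * k + 9" and "3 \<le> a" "reversed n a b" "reversed n b c" "c < n"
  shows "pair_up (even_switch n) a = b \<or> pair_up (even_switch n) b = c"
proof -
  have "9 \<le> n" using n by simp
  then have "even_switch n a \<and> b = Suc a \<or> even_switch n b \<and> c = Suc b"
    using assms(3-5)
  proof (cases rule: reversed_path_cases)
    case 1
    then have "even_switch n a \<or> even_switch n (Suc a)" unfolding even_switch_def by presburger
    then show ?thesis using 1 by auto
  next
    case 4
    then have "even_switch n a" using n unfolding even_switch_def by presburger
    then show ?thesis using 4 by simp
  qed (use assms(2) in \<open>auto simp: even_switch_def\<close>)
  then show ?thesis using pair_up_Suc by metis
qed

lemma matching_rank_delete_2:
  assumes n: "n = 2 * k + 9"
  shows "\<exists>r. inj_on r ({..<n} - {2}) \<and> rank_matching ({..<n} - {2}) (arc n) r"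
proof -
  let ?S = "{..<n} - {1, 2, 3}" and ?m = "(pair_up (even_switch n))(1 := 3, 3 := 1)"
  have "insert 1 (insert 3 ?S) = {..<n} - {2}" using n by auto
  moreover have "reversal_pairing n (insert 1 (insert 3 ?S)) ?m"
    by (rule reversal_pairing_insert_pair[OF reversal_pairing_even_switch[OF n] pair_up_adjacent])
      (auto simp: reversed_def)
  ultimately have pairing: "reversal_pairing n ({..<n} - {2}) ?m" by simp
  have covers: "?m a = b \<or> ?m b = c"
    if abc: "a \<in> {..<n} - {2}" "b \<in> {..<n} - {2}" "c \<in> {..<n} - {2}"
      and ab: "reversed n a b" and bc: "reversed n b c" for a b c
  proof -
    consider "a < 3" | "a = 3" | "3 < a" by linarith
    then show ?thesis
    proof cases
      case 1
      have n9: "9 \<le> n" and c: "c < n" using n abc(3) by simp_all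
      have "a = 1 \<and> b = 3 \<or> b = 1 \<and> c = 3"
        by (rule reversed_path_cases[OF n9 ab bc c]) (use 1 n9 in auto)
      then show ?thesis by auto
    next
      case 2
      then have "b = 4" "c = 5" using ab bc n by (auto simp: reversed_def)
      moreover have "even_switch n 4" using n by (simp add: even_switch_def)
      ultimately show ?thesis using pair_up_Suc by fastforce
    next
      case 3
      then have "a \<notin> {1, 3}" "b \<notin> {1, 3}" using reversed_less[OF ab] by auto
      then show ?thesis using even_switch_covers[OF n _ ab bc] abc 3 by auto
    qed
  qed
  have "9 \<le> n" using n by simp
  from rank_matching_reversal_pairing[OF this pairing covers] show ?thesis by blast
qed

text \<open>After deleting \<open>0\<close>, the vertices \<open>2, 3, 1\<close> come first in this order, at the odd ranks
  \<open>5, 7\<close> around the rank \<open>6\<close> of \<open>3\<close>; the only backedge among them is \<open>1 \<rightarrow> 2\<close>.\<close>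

lemma matching_rank_delete_0:
  assumes n: "n = 2 * k + 9"
  shows "\<exists>r. inj_on r ({..<n} - {0}) \<and> rank_matching ({..<n} - {0}) (arc n) r"
proof -
  let ?S = "{..<n} - {0, 1, 2}" and ?m = "pair_up (even_switch n)"
  define r where "r u = (if u = 1 then 7 else if u = 2 then 5 else 2 * ?m u)" for u
  have n9: "9 \<le> n" using n by simp
  have pairing: "reversal_pairing n ?S ?m"
    by (rule reversal_pairing_pair_up) (use n in \<open>auto simp: even_switch_def reversed_def\<close>)
  have covers: "?m a = b \<or> ?m b = c"
    if "a \<in> ?S" "b \<in> ?S" "c \<in> ?S" "reversed n a b" "reversed n b c" for a b c
    using even_switch_covers[OF n _ that(4,5)] that by auto
  note m_matching = rank_matching_reversal_pairing[OF n9 pairing covers]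
  have r12: "r 1 = 7" "r 2 = 5" by (simp_all add: r_def)
  have r_S: "r u = 2 * ?m u" if "u \<notin> {1, 2}" for u using that by (simp add: r_def)
  have inj_S: "inj_on r ?S"
  proof (rule inj_onI)
    fix x y assume "x \<in> ?S" "y \<in> ?S" "r x = r y"
    then have "?m x = ?m y" using r_S by simp
    then show "x = y" using inj_onD[OF m_matching(1)] \<open>x \<in> ?S\<close> \<open>y \<in> ?S\<close> by blast
  qed
  have matching_S: "rank_matching ?S (arc n) r"
    using m_matching(2) by (rule rank_matching_order_cong) (auto simp: r_S)
  have m_ge_3: "3 \<le> ?m y \<and> (?m y = 3 \<longrightarrow> y = 3)" if "y \<in> ?S" for y
    using that n by (auto simp: pair_up_def even_switch_def)
  have no_cross: "\<not> (arc n x y \<and> r y < r x) \<and> \<not> (arc n y x \<and> r x < r y)"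
    if "x \<in> {1, 2}" "y \<in> ?S" for x y
  proof -
    have "6 \<le> r y" "r y < 7 \<longrightarrow> y = 3" using m_ge_3[OF \<open>y \<in> ?S\<close>] r_S[of y] \<open>y \<in> ?S\<close> by auto
    moreover have "r 3 = 6" using n by (simp add: r_def pair_up_def even_switch_def)
    moreover have "\<not> arc n 1 3" "arc n y 1 \<Longrightarrow> y = 3" "\<not> arc n y 2"
      using that n by (auto simp: arc_def reversed_def)
    ultimately show ?thesis using that r12 by auto
  qed
  have "{1, 2} \<union> ?S = {..<n} - {0}" using n by auto
  moreover have "rank_matching ({1, 2} \<union> ?S) (arc n) r"
    by (rule rank_matching_Un[OF _ _ matching_S no_cross])
      (use n r12 in \<open>auto simp: rank_matching_def arc_def reversed_def\<close>)
  moreover have "inj_on r ({1, 2} \<union> ?S)"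
  proof -
    have "even (r u)" if "u \<in> ?S" for u using r_S[of u] that by simp
    then have "r ` (?S - {1, 2}) \<inter> {5, 7} = {}" by fastforce
    moreover have "r ` ({1, 2} - ?S) \<subseteq> {5, 7}" using r12 by auto
    ultimately have "r ` ({1, 2} - ?S) \<inter> r ` (?S - {1, 2}) = {}" by blast
    moreover have "inj_on r {1, 2}" using r12 by (auto simp: inj_on_def)
    ultimately show ?thesis using inj_S unfolding inj_on_Un by blast
  qed
  ultimately show ?thesis by auto
qed

lemma matching_rank_reflect:
  assumes "S \<subseteq> {..<n}" "finite S" "inj_on r S" and matching: "rank_matching S (arc n) r"
  shows "\<exists>r'. inj_on r' ((\<lambda>u. n - 1 - u) ` S) \<and> rank_matching ((\<lambda>u. n - 1 - u) ` S) (arc n) r'"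
proof -
  define C where "C = Max (r ` S)"
  have le_C: "r u \<le> C" if "u \<in> S" for u using assms(2) that by (simp add: C_def)
  have reflect_twice: "n - 1 - (n - 1 - u) = u" if "u \<in> S" for u using assms(1) that by auto
  define r' where "r' u = C - r (n - 1 - u)" for u
  have "inj_on r' ((\<lambda>u. n - 1 - u) ` S)"
  proof (rule inj_onI, elim imageE)
    fix x y x0 y0 assume "r' x = r' y" "x0 \<in> S" "x = n - 1 - x0" "y0 \<in> S" "y = n - 1 - y0"
    then have "r x0 = r y0" using le_C reflect_twice by (simp add: r'_def) (metis diff_diff_cancel)
    then have "x0 = y0" using inj_onD[OF assms(3)] \<open>x0 \<in> S\<close> \<open>y0 \<in> S\<close> by blast
    then show "x = y" using \<open>x = _\<close> \<open>y = _\<close> by simp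
  qed
  moreover have "rank_matching ((\<lambda>u. n - 1 - u) ` S) (arc n) r'"
    unfolding rank_matching_def
  proof (intro ballI impI, elim imageE)
    fix x y z w x0 y0 z0 w0
    assume h: "arc n x y \<and> r' y < r' x \<and> arc n z w \<and> r' w < r' z \<and> (x = z \<or> x = w \<or> y = z \<or> y = w)"
      and S: "x0 \<in> S" "y0 \<in> S" "z0 \<in> S" "w0 \<in> S"
      and images: "x = n - 1 - x0" "y = n - 1 - y0" "z = n - 1 - z0" "w = n - 1 - w0"
    have lt: "x0 < n" "y0 < n" "z0 < n" "w0 < n" using S assms(1) by auto
    have arcs: "arc n y0 x0" "arc n w0 z0"
      using h arc_reflect[of x0 n y0] arc_reflect[of z0 n w0] lt unfolding images by simp_all
    have "C - r y0 < C - r x0" "C - r w0 < C - r z0"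
      using h reflect_twice S unfolding images r'_def by simp_all
    then have ranks: "r x0 < r y0" "r z0 < r w0" by (meson diff_le_mono2 not_less)+
    have "y0 = w0 \<or> y0 = z0 \<or> x0 = w0 \<or> x0 = z0"
      using h lt unfolding images by auto
    then have "y0 = w0 \<and> x0 = z0"
      using rank_matchingD[OF matching S(2,1,4,3) arcs(1) ranks(1) arcs(2) ranks(2)] by blast
    then show "x = z \<and> y = w" using images by simp
  qed
  ultimately show ?thesis by blast
qed

lemma reflect_delete:
  "v < n \<Longrightarrow> (\<lambda>u. n - 1 - u) ` ({..<n} - {v}) = {..<n :: nat} - {n - 1 - v}"
proof (intro equalityI subsetI)
  fix x assume "v < n" "x \<in> {..<n} - {n - 1 - v}"
  then have x: "x < n" "x \<noteq> n - 1 - v" by auto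
  have x_eq: "x = n - 1 - (n - 1 - x)" using x by (simp add: diff_diff_cancel)
  moreover have "n - 1 - x \<in> {..<n} - {v}" using x x_eq by auto
  ultimately show "x \<in> (\<lambda>u. n - 1 - u) ` ({..<n} - {v})" by (rule image_eqI)
qed auto

lemma matching_rank_delete:
  assumes n: "n = 2 * k + 9" and v: "v < n"
  shows "\<exists>r. inj_on r ({..<n} - {v}) \<and> rank_matching ({..<n} - {v}) (arc n) r"
proof -
  have mirror: "\<exists>r. inj_on r ({..<n} - {v}) \<and> rank_matching ({..<n} - {v}) (arc n) r"
    if reflected: "\<exists>r. inj_on r ({..<n} - {n - 1 - v}) \<and> rank_matching ({..<n} - {n - 1 - v}) (arc n) r"
  proof -
    obtain r where inj: "inj_on r ({..<n} - {n - 1 - v})"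
      and matching: "rank_matching ({..<n} - {n - 1 - v}) (arc n) r"
      using reflected by blast
    have "\<exists>r'. inj_on r' ((\<lambda>u. n - 1 - u) ` ({..<n} - {n - 1 - v})) \<and>
      rank_matching ((\<lambda>u. n - 1 - u) ` ({..<n} - {n - 1 - v})) (arc n) r'"
      by (rule matching_rank_reflect[OF _ _ inj matching]) auto
    moreover have "(\<lambda>u. n - 1 - u) ` ({..<n} - {n - 1 - v}) = {..<n} - {v}"
      using reflect_delete[of "n - 1 - v" n] v by simp
    ultimately show ?thesis by simp
  qed
  consider "v = 0" | "v = 2" | "v = n - 3" | "v = n - 1" | "v \<noteq> 0" "v \<noteq> 2" "v + 3 \<noteq> n" "v + 1 \<noteq> n"
    using n v by linarith
  then show ?thesis
  proof cases
    case 3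
    then show ?thesis using mirror matching_rank_delete_2[OF n] n by simp
  next
    case 4
    then show ?thesis using mirror matching_rank_delete_0[OF n] n by simp
  qed (use matching_rank_delete_0[OF n] matching_rank_delete_2[OF n]
      matching_rank_delete_inner[OF n v] in auto)
qed

lemma minimal_non_matching_arc:
  assumes n: "n = 2 * k + 9"
  shows "minimal_non_matching {..<n} (arc n)"
  unfolding minimal_non_matching_def
proof (intro conjI allI impI)
  show "tournament {..<n} (arc n)"
    by (rule tournament_arc) (use n in \<open>auto simp: lessThan_empty_iff\<close>)
  show "\<not> matching_tournament {..<n} (arc n)" using not_matching_tournament_arc[OF n] .
  fix S assume S: "S \<subseteq> {..<n} \<and> S \<noteq> {} \<and> S \<noteq> {..<n}"
  then obtain v where v: "v < n" "v \<notin> S" by auto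
  then have sub: "S \<subseteq> {..<n} - {v}" using S by auto
  obtain r where "inj_on r ({..<n} - {v})" "rank_matching ({..<n} - {v}) (arc n) r"
    using matching_rank_delete[OF n v(1)] by blast
  then have "inj_on r S" "rank_matching S (arc n) r"
    using sub by (auto intro: inj_on_subset rank_matching_subset)
  moreover have "finite S" using S finite_subset by blast
  ultimately have "\<exists>vs. matching_ordering S (arc n) vs"
    by (intro matching_ordering_if_rank_matching)
  then show "matching_tournament S (arc n)"
    using tournament_arc[of S n] S by (simp add: matching_tournament_def)
qed

theorem theorem5p9:
  shows "\<exists>T :: (nat set \<times> (nat \<Rightarrow> nat \<Rightarrow> bool)) set. infinite T \<and>
    (\<forall>(V, E)\<in>T. minimal_non_matching V E) \<and>
    (\<forall>(V1, E1)\<in>T. \<forall>(V2, E2)\<in>T. (V1, E1) \<noteq> (V2, E2) \<longrightarrow> \<not> tournament_iso V1 E1 V2 E2)"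
proof (intro exI conjI)
  let ?T = "\<lambda>k::nat. ({..<2 * k + 9}, arc (2 * k + 9))"
  have "inj ?T" by (rule injI) simp
  then show "infinite (range ?T)" using finite_imageD infinite_UNIV_nat by blast
  show "\<forall>(V, E)\<in>range ?T. minimal_non_matching V E"
    using minimal_non_matching_arc by auto
  show "\<forall>(V1, E1)\<in>range ?T. \<forall>(V2, E2)\<in>range ?T. (V1, E1) \<noteq> (V2, E2) \<longrightarrow> \<not> tournament_iso V1 E1 V2 E2"
    by (auto simp: tournament_iso_def dest!: bij_betw_same_card)
qed

end
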